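(* Let $B$ be a unital commutative semi-simple Banach algebra with connected maximal ideal space $X$. Let $T$ be a unital endomorphism of $B$ which is a Riesz operator, induced by a selfmap $\phi$ of $X$, and suppose $\{x_0\}=\bigcap_{n=0}^\infty\phi_n(X)$. Then for each $\varepsilon>0$ there exists a positive integer $N$ such that $\phi_N(X)\subset B(x_0,\varepsilon)$.
   Context: The maximal ideal space $X$ of $B$ carries the weak-* (Gelfand) topology, and $\hat f$ denotes the Gelfand transform of $f\in B$. A unital endomorphism $T$ of $B$ is induced by a weak-* continuous selfmap $\phi$ of $X$ if $\widehat{Tf}(x)=\hat f(\phi(x))$ for all $f\in B$, $x\in X$; $\phi_n$ is the $n$-th iterate of $\phi$ ($\phi_0$ the identity). For $x,y\in X$, $\|x-y\|=\sup\{|\hat f(x)-\hat f(y)|: f\in B,\ \|f\|\le 1\}$ (the norm of $x-y$ in the dual $B^*$), and $B(a,\varepsilon)=\{x\in X:\|x-a\|<\varepsilon\}$. A bounded operator $T$ is a Riesz operator if $\lim_{n}\left[\inf\{\|T^n-K\|:K \text{ compact}\}\right]^{1/n}=0$. *)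

theory Defs
  imports "HOL-Analysis.Analysis"
begin

text \<open>A unital commutative complex Banach algebra: the carrier type is a real
unital normed algebra which is complete and commutative, equipped with a
complex scalar multiplication cs extending the real one, compatible with the
multiplication and absolutely homogeneous for the norm.\<close>

definition complex_banach_algebra ::
  "(complex \<Rightarrow> 'a::{comm_ring_1,real_normed_algebra_1,banach} \<Rightarrow> 'a) \<Rightarrow> bool" where
  "complex_banach_algebra cs \<longleftrightarrow>
     (\<forall>a. cs 1 a = a) \<and>
     (\<forall>c d a. cs c (cs d a) = cs (c * d) a) \<and>
     (\<forall>c a b. cs c (a + b) = cs c a + cs c b) \<and>
     (\<forall>c d a. cs (c + d) a = cs c a + cs d a) \<and>
     (\<forall>r a. cs (complex_of_real r) a = scaleR r a) \<and>
     (\<forall>c a b. cs c (a * b) = cs c a * b) \<and>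
     (\<forall>c a. norm (cs c a) = cmod c * norm a)"

definition clinear_map :: "(complex \<Rightarrow> 'a::{comm_ring_1,real_normed_algebra_1,banach} \<Rightarrow> 'a) \<Rightarrow> ('a \<Rightarrow> 'a) \<Rightarrow> bool" where
  "clinear_map cs T \<longleftrightarrow> (\<forall>a b. T (a + b) = T a + T b) \<and> (\<forall>c a. T (cs c a) = cs c (T a))"

text \<open>Characters (nonzero complex homomorphisms): the maximal ideal space.\<close>
definition characters :: "(complex \<Rightarrow> 'a::{comm_ring_1,real_normed_algebra_1,banach} \<Rightarrow> 'a) \<Rightarrow> ('a \<Rightarrow> complex) set" where
  "characters cs = {h. (\<forall>a b. h (a + b) = h a + h b) \<and> (\<forall>c a. h (cs c a) = c * h a)
                       \<and> (\<forall>a b. h (a * b) = h a * h b) \<and> h 1 = 1}"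

definition gelfand_topology :: "(complex \<Rightarrow> 'a::{comm_ring_1,real_normed_algebra_1,banach} \<Rightarrow> 'a) \<Rightarrow> ('a \<Rightarrow> complex) topology" where
  "gelfand_topology cs = subtopology (product_topology (\<lambda>_. euclidean) UNIV) (characters cs)"

definition semisimple :: "(complex \<Rightarrow> 'a::{comm_ring_1,real_normed_algebra_1,banach} \<Rightarrow> 'a) \<Rightarrow> bool" where
  "semisimple cs \<longleftrightarrow> (\<forall>f. (\<forall>h\<in>characters cs. h f = 0) \<longrightarrow> f = 0)"

definition bounded_op :: "('a::{comm_ring_1,real_normed_algebra_1,banach} \<Rightarrow> 'a) \<Rightarrow> bool" where
  "bounded_op T \<longleftrightarrow> (\<exists>C. \<forall>f. norm (T f) \<le> C * norm f)"

definition compact_op :: "(complex \<Rightarrow> 'a::{comm_ring_1,real_normed_algebra_1,banach} \<Rightarrow> 'a) \<Rightarrow> ('a \<Rightarrow> 'a) \<Rightarrow> bool" where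
  "compact_op cs K \<longleftrightarrow> clinear_map cs K \<and> compact (closure (K ` {f. norm f \<le> 1}))"

definition ess_norm_pow :: "(complex \<Rightarrow> 'a::{comm_ring_1,real_normed_algebra_1,banach} \<Rightarrow> 'a) \<Rightarrow> ('a \<Rightarrow> 'a) \<Rightarrow> nat \<Rightarrow> real" where
  "ess_norm_pow cs T n = Inf {onorm (\<lambda>f. (T ^^ n) f - K f) | K. compact_op cs K}"

definition riesz_operator :: "(complex \<Rightarrow> 'a::{comm_ring_1,real_normed_algebra_1,banach} \<Rightarrow> 'a) \<Rightarrow> ('a \<Rightarrow> 'a) \<Rightarrow> bool" where
  "riesz_operator cs T \<longleftrightarrow> clinear_map cs T \<and> bounded_op T \<and>
     (\<lambda>n. ess_norm_pow cs T n powr (1 / real n)) \<longlonglongrightarrow> 0"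

definition dual_dist :: "('a::{comm_ring_1,real_normed_algebra_1,banach} \<Rightarrow> complex) \<Rightarrow> ('a \<Rightarrow> complex) \<Rightarrow> real" where
  "dual_dist x y = Sup {cmod (x f - y f) | f. norm f \<le> 1}"

definition unital_endomorphism :: "(complex \<Rightarrow> 'a::{comm_ring_1,real_normed_algebra_1,banach} \<Rightarrow> 'a) \<Rightarrow> ('a \<Rightarrow> 'a) \<Rightarrow> bool" where
  "unital_endomorphism cs T \<longleftrightarrow> clinear_map cs T \<and> (\<forall>a b. T (a * b) = T a * T b) \<and> T 1 = 1"

definition induced_by :: "(complex \<Rightarrow> 'a::{comm_ring_1,real_normed_algebra_1,banach} \<Rightarrow> 'a) \<Rightarrow> ('a \<Rightarrow> 'a)
    \<Rightarrow> (('a \<Rightarrow> complex) \<Rightarrow> ('a \<Rightarrow> complex)) \<Rightarrow> bool" where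
  "induced_by cs T \<phi> \<longleftrightarrow>
     continuous_map (gelfand_topology cs) (gelfand_topology cs) \<phi> \<and>
     (\<forall>f. \<forall>x\<in>characters cs. x (T f) = \<phi> x f)"

end

theory Submission
  imports Defs
begin

text \<open>Characters have norm at most 1, so the maximal ideal space \<open>X\<close> is weak-* compact and
the decreasing compact sets \<open>\<phi>\<^sub>n(X)\<close>, which shrink to \<open>{x\<^sub>0}\<close>, eventually lie in every
weak-* neighbourhood of \<open>x\<^sub>0\<close>. Since \<open>T\<close> is Riesz, some power \<open>T\<^sup>N\<close> is within a small
operator-norm distance of a compact operator, so \<open>T\<^sup>N\<close> maps the unit ball into a small
neighbourhood of a finite set \<open>G\<close>. Characters that nearly agree on \<open>G\<close> are therefore
mapped by \<open>\<phi>\<^sub>N\<close> to characters that are close in the norm of \<open>B\<^sup>*\<close>. Choosing \<open>M\<close> so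
that all of \<open>\<phi>\<^sub>M(X)\<close> nearly agrees with \<open>x\<^sub>0\<close> on \<open>G\<close>, and writing \<open>x\<^sub>0 = \<phi>\<^sub>N(y)\<close> with
\<open>y \<in> \<phi>\<^sub>M(X)\<close>, gives \<open>\<phi>\<^sub>N\<^sub>+\<^sub>M(X) \<subseteq> B(x\<^sub>0,\<epsilon>)\<close>.\<close>

lemma right_inverse_one_minus:
  fixes b :: "'a::{real_normed_algebra_1,banach}"
  assumes "norm b < 1"
  obtains s where "(1 - b) * s = 1"
proof -
  define s where "s = (\<Sum>n. b ^ n)"
  have s: "(\<lambda>n. b ^ n) sums s"
    unfolding s_def using complete_algebra_summable_geometric[OF assms] by (rule summable_sums)
  then have "(\<lambda>n. b ^ Suc n) sums (b * s)"
    using sums_mult[of "\<lambda>n. b ^ n" s b] by simp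
  then have "(\<lambda>n. b ^ n) sums (b * s + 1)"
    by (subst (asm) sums_Suc_iff) simp
  with s have "s = b * s + 1"
    by (rule sums_unique2)
  then show ?thesis
    by (intro that[of s]) (simp add: algebra_simps)
qed

lemma additive_character: "h \<in> characters cs \<Longrightarrow> Modules.additive h"
  by (simp add: characters_def Modules.additive_def)

lemma norm_character_le:
  assumes cb: "complex_banach_algebra cs" and h: "h \<in> characters cs"
  shows "cmod (h a) \<le> norm a"
proof (rule ccontr)
  assume "\<not> cmod (h a) \<le> norm a"
  then have lt: "norm a < cmod (h a)" and ha: "h a \<noteq> 0"
    by auto
  define b where "b = cs (1 / h a) a"
  have hb: "h b = 1"
    using h ha by (simp add: b_def characters_def)
  have "norm b < 1"
    using cb lt ha by (simp add: b_def complex_banach_algebra_def norm_divide divide_less_eq)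
  then obtain s where s: "(1 - b) * s = 1"
    by (rule right_inverse_one_minus)
  have "1 = h ((1 - b) * s)"
    using h by (simp add: s characters_def)
  also have "\<dots> = (h 1 - h b) * h s"
    using h additive.diff[OF additive_character[OF h]] by (simp add: characters_def)
  also have "\<dots> = 0"
    using h hb by (simp add: characters_def)
  finally show False
    by simp
qed

lemma character_diff_le:
  assumes cb: "complex_banach_algebra cs" and x: "x \<in> characters cs" and y: "y \<in> characters cs"
  shows "cmod (x a - y a) \<le> cmod (x b - y b) + 2 * norm (a - b)"
proof -
  have "x a - y a = (x b - y b) + x (a - b) - y (a - b)"
    using additive.diff[OF additive_character[OF x]] additive.diff[OF additive_character[OF y]]
    by simp
  then have "cmod (x a - y a) \<le> cmod (x b - y b) + cmod (x (a - b)) + cmod (y (a - b))"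
    by (metis (no_types, lifting) norm_triangle_ineq norm_triangle_ineq4 add_right_mono order_trans)
  then show ?thesis
    using norm_character_le[OF cb x, of "a - b"] norm_character_le[OF cb y, of "a - b"]
    by linarith
qed

lemma closed_characters: "closed (characters cs)"
proof -
  have "characters cs = {h. \<forall>a b. h (a + b) = h a + h b} \<inter> {h. \<forall>c a. h (cs c a) = c * h a}
     \<inter> {h. \<forall>a b. h (a * b) = h a * h b} \<inter> {h. h 1 = 1}"
    by (auto simp: characters_def)
  then show ?thesis
    by (simp only:) (intro closed_Int closed_Collect_all closed_Collect_eq continuous_intros
        continuous_on_product_coordinates)
qed

lemma compact_characters:
  assumes "complex_banach_algebra cs"
  shows "compact (characters cs)"
proof -
  let ?P = "PiE UNIV (\<lambda>a::'a. cball (0::complex) (norm a))"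
  have "compactin (product_topology (\<lambda>_. euclidean) UNIV) ?P"
    by (simp add: compactin_PiE)
  then have "compact ?P"
    by (simp add: euclidean_product_topology)
  moreover have "characters cs \<subseteq> ?P"
    using norm_character_le[OF assms] by (auto simp: PiE_iff)
  ultimately show ?thesis
    using compact_Int_closed[OF _ closed_characters] by (metis inf.absorb_iff2)
qed

lemma compact_imp_closed_fun:
  fixes S :: "('a \<Rightarrow> 'b::metric_space) set"
  assumes "compact S"
  shows "closed S"
proof -
  have "Hausdorff_space (euclidean :: ('a \<Rightarrow> 'b) topology)"
    using Hausdorff_space_product_topology[of "\<lambda>_. euclidean :: 'b topology" UNIV]
    by (simp add: euclidean_product_topology)
  moreover have "compactin euclidean S"
    using assms by simp
  ultimately have "closedin euclidean S"
    by (rule compactin_imp_closedin)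
  then show ?thesis
    by (simp only: closed_closedin)
qed

lemma dual_dist_le:
  assumes "\<And>f. norm f \<le> 1 \<Longrightarrow> cmod (x f - y f) \<le> c"
  shows "dual_dist x y \<le> c"
  unfolding dual_dist_def by (rule cSup_least) (use assms in \<open>auto intro: exI[of _ 0]\<close>)

lemma clinear_map_imp_linear:
  assumes cb: "complex_banach_algebra cs" and K: "clinear_map cs K"
  shows "linear K"
proof (rule linearI)
  show "K (x + y) = K x + K y" for x y
    using K by (simp add: clinear_map_def)
  have "K (cs (complex_of_real r) x) = cs (complex_of_real r) (K x)" for r x
    using K by (simp add: clinear_map_def)
  then show "K (r *\<^sub>R x) = r *\<^sub>R K x" for r x
    using cb by (simp add: complex_banach_algebra_def)
qed

lemma bounded_op_imp_bounded_linear: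
  assumes "complex_banach_algebra cs" "clinear_map cs T" "bounded_op T"
  shows "bounded_linear T"
proof -
  interpret linear T
    using clinear_map_imp_linear[OF assms(1,2)] .
  obtain C where "\<And>f. norm (T f) \<le> C * norm f"
    using assms(3) by (auto simp: bounded_op_def)
  then show ?thesis
    by (intro bounded_linear_intro[where K = C]) (auto simp: add scale mult.commute)
qed

lemma bounded_linear_if_bounded_on_unit_ball:
  fixes f :: "'a::real_normed_vector \<Rightarrow> 'b::real_normed_vector"
  assumes "linear f" and bound: "\<And>x. norm x \<le> 1 \<Longrightarrow> norm (f x) \<le> B"
  shows "bounded_linear f"
proof -
  interpret linear f
    by fact
  have "norm (f x) \<le> norm x * B" for x
  proof (cases "x = 0")
    case False
    then have "f x = norm x *\<^sub>R f (x /\<^sub>R norm x)"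
      by (simp flip: scale)
    then show ?thesis
      using bound[of "x /\<^sub>R norm x"] False by (simp add: mult_left_mono)
  qed (simp add: zero)
  then show ?thesis
    by (intro bounded_linear_intro) (auto simp: add scale)
qed

lemma compact_op_imp_bounded_linear:
  assumes "complex_banach_algebra cs" "compact_op cs K"
  shows "bounded_linear K"
proof -
  have "bounded (closure (K ` {f. norm f \<le> 1}))"
    using assms(2) by (simp add: compact_op_def compact_imp_bounded)
  then obtain B where B: "\<forall>y \<in> closure (K ` {f. norm f \<le> 1}). norm y \<le> B"
    by (auto simp: bounded_iff)
  have "norm (K f) \<le> B" if "norm f \<le> 1" for f
  proof -
    have "K f \<in> closure (K ` {f. norm f \<le> 1})"
      using that by (intro subsetD[OF closure_subset]) simp
    with B show ?thesis
      by blast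
  qed
  moreover have "linear K"
    using assms by (simp add: compact_op_def clinear_map_imp_linear)
  ultimately show ?thesis
    by (intro bounded_linear_if_bounded_on_unit_ball)
qed

lemma compact_op_zero:
  assumes "complex_banach_algebra cs"
  shows "compact_op cs (\<lambda>_. 0)"
proof -
  have "norm (cs c 0) = 0" for c
    using assms by (simp add: complex_banach_algebra_def)
  then have "cs c 0 = 0" for c
    by simp
  moreover have image: "(\<lambda>_. 0::'a) ` {f. norm f \<le> 1} = {0}"
    by (auto intro: image_eqI[of _ _ 0])
  ultimately show ?thesis
    unfolding compact_op_def clinear_map_def image by simp
qed

lemma bounded_linear_funpow:
  fixes T :: "'a::real_normed_vector \<Rightarrow> 'a"
  assumes "bounded_linear T"
  shows "bounded_linear (T ^^ n)"
proof (induction n)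
  case 0
  show ?case
    by (simp add: id_def)
next
  case (Suc n)
  show ?case
    using bounded_linear_compose[OF assms Suc] by (simp add: o_def)
qed

lemma riesz_operator_power_near_compact:
  assumes cb: "complex_banach_algebra cs" and R: "riesz_operator cs T" and "0 < d"
  obtains N K where "N > 0" "compact_op cs K" "onorm (\<lambda>f. (T ^^ N) f - K f) < d"
proof -
  define d' where "d' = min d 1"
  have d': "0 < d'" "d' \<le> 1" "d' \<le> d"
    using \<open>0 < d\<close> by (auto simp: d'_def)
  have "(\<lambda>n. ess_norm_pow cs T n powr (1 / real n)) \<longlonglongrightarrow> 0"
    using R by (simp add: riesz_operator_def)
  from order_tendstoD(2)[OF this d'(1)] obtain N0
    where N0: "\<And>n. n \<ge> N0 \<Longrightarrow> ess_norm_pow cs T n powr (1 / real n) < d'"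
    by (auto simp: eventually_sequentially)
  define N where "N = Suc N0"
  have "N > 0" and root: "ess_norm_pow cs T N powr (1 / real N) < d'"
    unfolding N_def using N0[of "Suc N0"] by simp_all
  have "ess_norm_pow cs T N < d'"
  proof (rule ccontr)
    assume "\<not> ess_norm_pow cs T N < d'"
    then have "d' powr (1 / real N) \<le> ess_norm_pow cs T N powr (1 / real N)"
      using d' by (intro powr_mono2) auto
    moreover have "d' powr 1 \<le> d' powr (1 / real N)"
      using d' \<open>N > 0\<close> by (intro powr_mono') auto
    ultimately show False
      using root d' by simp
  qed
  moreover have "{onorm (\<lambda>f. (T ^^ N) f - K f) | K. compact_op cs K} \<noteq> {}"
    using compact_op_zero[OF cb] by blast
  ultimately obtain v where "v \<in> {onorm (\<lambda>f. (T ^^ N) f - K f) | K. compact_op cs K}" "v < d'"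
    unfolding ess_norm_pow_def by (meson cInf_lessD)
  then obtain K where K: "compact_op cs K" "onorm (\<lambda>f. (T ^^ N) f - K f) < d'"
    by blast
  show ?thesis
    using that[OF \<open>N > 0\<close> K(1)] K(2) d'(3) by linarith
qed

lemma norm_le_onorm:
  assumes "bounded_linear f" "norm x \<le> 1"
  shows "norm (f x) \<le> onorm f"
proof -
  have "norm (f x) \<le> onorm f * norm x"
    by (rule onorm[OF assms(1)])
  also have "\<dots> \<le> onorm f"
    using assms(2) onorm_pos_le[OF assms(1)] by (simp add: mult_left_le)
  finally show ?thesis .
qed

lemma compact_op_near_finite:
  assumes "compact_op cs K" "0 < e"
  obtains G where "finite G" "\<And>f. norm f \<le> 1 \<Longrightarrow> \<exists>g\<in>G. norm (K f - g) < e"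
proof -
  define S where "S = closure (K ` {f. norm f \<le> 1})"
  have "compact S"
    using assms(1) by (simp add: compact_op_def S_def)
  moreover have "S \<subseteq> (\<Union>g\<in>S. ball g e)"
    using assms(2) by auto
  ultimately obtain G where "G \<subseteq> S" "finite G" and cover: "S \<subseteq> (\<Union>g\<in>G. ball g e)"
    by (rule compactE_image[OF _ open_ball])
  have "\<exists>g\<in>G. norm (K f - g) < e" if "norm f \<le> 1" for f
  proof -
    have "K f \<in> S"
      unfolding S_def using that by (intro subsetD[OF closure_subset]) simp
    with cover obtain g where "g \<in> G" "dist g (K f) < e"
      by auto
    then show ?thesis
      by (auto simp: dist_norm norm_minus_commute)
  qed
  with \<open>finite G\<close> show ?thesis
    by (rule that)
qed

lemma riesz_operator_power_near_finite:
  assumes cb: "complex_banach_algebra cs" and R: "riesz_operator cs T" and "0 < \<delta>"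
  obtains N G where "N > 0" "finite G"
    "\<And>f. norm f \<le> 1 \<Longrightarrow> \<exists>g\<in>G. norm ((T ^^ N) f - g) < \<delta>"
proof -
  have "0 < \<delta> / 2"
    using \<open>0 < \<delta>\<close> by simp
  then obtain N K where N: "N > 0" and K: "compact_op cs K"
    and small: "onorm (\<lambda>f. (T ^^ N) f - K f) < \<delta> / 2"
    by (rule riesz_operator_power_near_compact[OF cb R])
  obtain G where G: "finite G" "\<And>f. norm f \<le> 1 \<Longrightarrow> \<exists>g\<in>G. norm (K f - g) < \<delta> / 2"
    using compact_op_near_finite[OF K \<open>0 < \<delta> / 2\<close>] by blast
  have "bounded_linear T"
    using R by (intro bounded_op_imp_bounded_linear[OF cb]) (auto simp: riesz_operator_def)
  then have bl: "bounded_linear (\<lambda>f. (T ^^ N) f - K f)"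
    by (intro bounded_linear_sub bounded_linear_funpow compact_op_imp_bounded_linear[OF cb K])
  have "\<exists>g\<in>G. norm ((T ^^ N) f - g) < \<delta>" if f: "norm f \<le> 1" for f
  proof -
    obtain g where "g \<in> G" "norm (K f - g) < \<delta> / 2"
      using G(2)[OF f] by blast
    moreover have "norm ((T ^^ N) f - K f) < \<delta> / 2"
      using norm_le_onorm[OF bl f] small by simp
    ultimately show ?thesis
      using norm_diff_triangle_less[of "(T ^^ N) f" "K f" "\<delta> / 2" g "\<delta> / 2"] by auto
  qed
  with N G(1) show ?thesis
    by (rule that)
qed

lemma funpow_image_subset: "f ` S \<subseteq> S \<Longrightarrow> (f ^^ n) ` S \<subseteq> S"
  by (induction n) auto

lemma decseq_funpow_image:
  assumes "f ` S \<subseteq> S"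
  shows "decseq (\<lambda>n. (f ^^ n) ` S)"
proof (rule decseq_SucI)
  fix n
  have "(f ^^ Suc n) ` S = (f ^^ n) ` (f ` S)"
    by (simp only: funpow_Suc_right image_comp)
  with assms show "(f ^^ Suc n) ` S \<subseteq> (f ^^ n) ` S"
    by blast
qed

lemma continuous_on_funpow:
  assumes "continuous_on S f" "f ` S \<subseteq> S"
  shows "continuous_on S (f ^^ n)"
proof (induction n)
  case 0
  show ?case
    by (simp add: continuous_on_id)
next
  case (Suc n)
  have "continuous_on ((f ^^ n) ` S) f"
    using assms continuous_on_subset funpow_image_subset by blast
  with Suc show ?case
    using continuous_on_compose by fastforce
qed

lemma decseq_closed_eventually_subset:
  fixes A :: "nat \<Rightarrow> 'a::topological_space set"
  assumes dec: "decseq A" and "compact (A 0)" and clo: "\<And>n. closed (A n)"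
    and "open U" and sub: "(\<Inter>n. A n) \<subseteq> U"
  obtains M where "A M \<subseteq> U"
proof (rule ccontr)
  assume "\<not> thesis"
  then have outside: "A M - U \<noteq> {}" for M
    using that by blast
  have "(A 0 - U) \<inter> (\<Inter>n\<in>UNIV. A n) \<noteq> {}"
  proof (rule compact_imp_fip_image)
    show "compact (A 0 - U)"
      using assms by (simp add: Diff_eq compact_Int_closed closed_Compl)
    fix I :: "nat set"
    assume "finite I"
    have "A (Max (insert 0 I)) \<subseteq> A n" if "n \<in> insert 0 I" for n
      using \<open>finite I\<close> that by (intro decseqD[OF dec] Max_ge) auto
    then show "(A 0 - U) \<inter> (\<Inter>n\<in>I. A n) \<noteq> {}"
      using outside by blast
  qed (rule clo)
  with sub show False
    by blast
qed

lemma induced_by_self_map: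
  assumes "induced_by cs T \<phi>"
  shows "continuous_on (characters cs) \<phi>" "\<phi> ` characters cs \<subseteq> characters cs"
  using assms by (auto simp: induced_by_def gelfand_topology_def euclidean_product_topology)

lemma induced_by_funpow:
  assumes ind: "induced_by cs T \<phi>" and x: "x \<in> characters cs"
  shows "(\<phi> ^^ n) x f = x ((T ^^ n) f)"
proof (induction n arbitrary: f)
  case (Suc n)
  have "(\<phi> ^^ n) x \<in> characters cs"
    using funpow_image_subset[OF induced_by_self_map(2)[OF ind]] x by blast
  then have "(\<phi> ^^ Suc n) x f = (\<phi> ^^ n) x (T f)"
    using ind by (simp add: induced_by_def)
  also have "\<dots> = x ((T ^^ n) (T f))"
    by (rule Suc)
  finally show ?case
    by (simp only: funpow_Suc_right comp_apply)
qed simp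

lemma dual_dist_funpow_le:
  assumes cb: "complex_banach_algebra cs" and ind: "induced_by cs T \<phi>"
    and x: "x \<in> characters cs" and y: "y \<in> characters cs"
    and near: "\<And>f. norm f \<le> 1 \<Longrightarrow> \<exists>g\<in>G. norm ((T ^^ N) f - g) < \<delta>"
    and agree: "\<And>g. g \<in> G \<Longrightarrow> cmod (x g - y g) < \<eta>"
  shows "dual_dist ((\<phi> ^^ N) x) ((\<phi> ^^ N) y) \<le> \<eta> + 2 * \<delta>"
proof (rule dual_dist_le)
  fix f :: 'a
  assume "norm f \<le> 1"
  then obtain g where g: "g \<in> G" "norm ((T ^^ N) f - g) < \<delta>"
    using near by blast
  have "cmod ((\<phi> ^^ N) x f - (\<phi> ^^ N) y f) = cmod (x ((T ^^ N) f) - y ((T ^^ N) f))"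
    using induced_by_funpow[OF ind] x y by simp
  also have "\<dots> \<le> cmod (x g - y g) + 2 * norm ((T ^^ N) f - g)"
    by (rule character_diff_le[OF cb x y])
  also have "\<dots> \<le> \<eta> + 2 * \<delta>"
    using agree[OF g(1)] g(2) by linarith
  finally show "cmod ((\<phi> ^^ N) x f - (\<phi> ^^ N) y f) \<le> \<eta> + 2 * \<delta>" .
qed

lemma induced_by_funpow_image_eventually_subset:
  assumes cb: "complex_banach_algebra cs" and ind: "induced_by cs T \<phi>"
    and "open U" and "(\<Inter>n. (\<phi> ^^ n) ` characters cs) \<subseteq> U"
  obtains M where "(\<phi> ^^ M) ` characters cs \<subseteq> U"
proof -
  note self_map = induced_by_self_map[OF ind]
  have "compact ((\<phi> ^^ 0) ` characters cs)"
    using compact_characters[OF cb] by simp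
  moreover have "closed ((\<phi> ^^ n) ` characters cs)" for n
    by (intro compact_imp_closed_fun compact_continuous_image continuous_on_funpow self_map
        compact_characters cb)
  ultimately obtain M where "(\<phi> ^^ M) ` characters cs \<subseteq> U"
    using decseq_closed_eventually_subset[OF decseq_funpow_image[OF self_map(2)]] assms(3,4)
    by blast
  then show ?thesis
    by (rule that)
qed

lemma induced_by_funpow_image_dual_dist_le:
  assumes cb: "complex_banach_algebra cs" and ind: "induced_by cs T \<phi>"
    and near: "\<And>f. norm f \<le> 1 \<Longrightarrow> \<exists>g\<in>G. norm ((T ^^ N) f - g) < \<delta>"
    and M: "(\<phi> ^^ M) ` characters cs \<subseteq> (\<Inter>g\<in>G. {x. cmod (x g - x0 g) < \<eta>})"
    and x0: "x0 \<in> (\<phi> ^^ (N + M)) ` characters cs"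
  shows "(\<phi> ^^ (N + M)) ` characters cs \<subseteq> {x \<in> characters cs. dual_dist x x0 \<le> 2 * \<eta> + 2 * \<delta>}"
proof
  note into = funpow_image_subset[OF induced_by_self_map(2)[OF ind]]
  obtain y where y: "y \<in> (\<phi> ^^ M) ` characters cs" "x0 = (\<phi> ^^ N) y"
    using x0 by (auto simp: funpow_add)
  fix z
  assume "z \<in> (\<phi> ^^ (N + M)) ` characters cs"
  then obtain x where x: "x \<in> (\<phi> ^^ M) ` characters cs" "z = (\<phi> ^^ N) x"
    by (auto simp: funpow_add)
  have "dual_dist z x0 \<le> 2 * \<eta> + 2 * \<delta>"
    unfolding x(2) y(2)
  proof (rule dual_dist_funpow_le[OF cb ind _ _ near])
    show "x \<in> characters cs" "y \<in> characters cs"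
      using x(1) y(1) into by blast+
    show "cmod (x g - y g) < 2 * \<eta>" if "g \<in> G" for g
    proof -
      have "cmod (x g - x0 g) < \<eta>" "cmod (y g - x0 g) < \<eta>"
        using x(1) y(1) M that by auto
      then show ?thesis
        using norm_triangle_ineq4[of "x g - x0 g" "y g - x0 g"] by simp
    qed
  qed
  moreover have "z \<in> characters cs"
    using x into by blast
  ultimately show "z \<in> {x \<in> characters cs. dual_dist x x0 \<le> 2 * \<eta> + 2 * \<delta>}"
    by simp
qed

theorem theorem1p2:
  fixes cs :: "complex \<Rightarrow> 'a::{comm_ring_1,real_normed_algebra_1,banach} \<Rightarrow> 'a"
    and T :: "'a \<Rightarrow> 'a"
    and \<phi> :: "('a \<Rightarrow> complex) \<Rightarrow> ('a \<Rightarrow> complex)"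
    and x0 :: "'a \<Rightarrow> complex"
  assumes "complex_banach_algebra cs"
    and "semisimple cs"
    and "connected_space (gelfand_topology cs)"
    and "unital_endomorphism cs T"
    and "riesz_operator cs T"
    and "induced_by cs T \<phi>"
    and "{x0} = (\<Inter>n. (\<phi> ^^ n) ` characters cs)"
  shows "\<forall>\<epsilon>>0. \<exists>N>0. (\<phi> ^^ N) ` characters cs \<subseteq> {x \<in> characters cs. dual_dist x x0 < \<epsilon>}"
proof (intro allI impI)
  fix \<epsilon> :: real
  assume "\<epsilon> > 0"
  then have "\<epsilon> / 4 > 0"
    by simp
  then obtain N G where "N > 0" "finite G"
    and near: "\<And>f. norm f \<le> 1 \<Longrightarrow> \<exists>g\<in>G. norm ((T ^^ N) f - g) < \<epsilon> / 4"
    using riesz_operator_power_near_finite[OF assms(1,5)] by blast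
  define U where "U = (\<Inter>g\<in>G. {x::'a \<Rightarrow> complex. cmod (x g - x0 g) < \<epsilon> / 8})"
  have "open U"
    unfolding U_def using \<open>finite G\<close>
    by (intro open_INT ballI open_Collect_less continuous_intros continuous_on_product_coordinates)
  moreover have "(\<Inter>n. (\<phi> ^^ n) ` characters cs) \<subseteq> U"
    unfolding assms(7)[symmetric] using \<open>\<epsilon> > 0\<close> by (simp add: U_def)
  ultimately obtain M where M: "(\<phi> ^^ M) ` characters cs \<subseteq> U"
    by (rule induced_by_funpow_image_eventually_subset[OF assms(1,6)])
  have "x0 \<in> (\<phi> ^^ (N + M)) ` characters cs"
    using assms(7) by (metis INT_D UNIV_I insertI1)
  with M have "(\<phi> ^^ (N + M)) ` characters cs
      \<subseteq> {x \<in> characters cs. dual_dist x x0 \<le> 2 * (\<epsilon> / 8) + 2 * (\<epsilon> / 4)}"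
    unfolding U_def using induced_by_funpow_image_dual_dist_le[OF assms(1,6) near] by blast
  then show "\<exists>N>0. (\<phi> ^^ N) ` characters cs \<subseteq> {x \<in> characters cs. dual_dist x x0 < \<epsilon>}"
    using \<open>N > 0\<close> \<open>\<epsilon> > 0\<close> by (intro exI[of _ "N + M"]) auto
qed

end
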